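(* Consider a cooperative multi-agent MDP with $N$ agents, finite individual state space $\mathcal S$ and finite individual action space $\mathcal A$ whose reward $\mathrm r$ and transition kernel $\mathbb P$ satisfy $\mathrm r(\mathbf s,\mathbf a)=\mathrm r(\kappa(\mathbf s),\kappa(\mathbf a))$ and $\mathbb P(\mathbf s'\mid\mathbf s,\mathbf a)=\mathbb P(\kappa(\mathbf s')\mid\kappa(\mathbf s),\kappa(\mathbf a))$ for all joint states/actions and all permutations $\kappa$ of the agents, and let $\nu(\mathbf a\mid\mathbf s)=\prod_{i=1}^N\mu(a_i\mid s_i)$ be a factorized policy with a shared local map $\mu$. Fix an agent, write its state as $s$ and the states of the remaining $N-1$ agents as $\mathbf s_r\in\mathcal S^{N-1}$, and write $V^\nu(s,\mathbf s_r)$ for the value of the corresponding joint state. Then for every permutation $\kappa$ of the remaining agents, $V^\nu(s,\mathbf s_r)=V^\nu(s,\kappa(\mathbf s_r))$. Moreover, there exists a function $g_\nu$ such that $V^\nu(s,\mathbf s_r)=g_\nu(s,\hat{\mathrm p}_{\mathbf s_r})$ for all $s,\mathbf s_r$, where $\hat{\mathrm p}_{\mathbf s_r}=\frac1N\sum_{s'\in\mathbf s_r}\delta_{s'}$.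
   Context: $\delta_x$ denotes the Dirac measure at $x$; the sum over $s'\in\mathbf s_r$ runs over the $N-1$ coordinates of $\mathbf s_r$ with multiplicity. The value function is $V^\nu(\mathbf s)=(1-\gamma)\mathbb E\{\sum_{t\ge0}\gamma^t\mathrm r(\mathbf s_t,\mathbf a_t)\mid \mathbf s_0=\mathbf s,\ \mathbf a_t\sim\nu(\cdot\mid\mathbf s_t)\}$ for a discount factor $\gamma\in(0,1)$. *)

theory Defs
  imports "HOL-Analysis.Analysis" "HOL-Combinatorics.Permutations"
begin

text \<open>Joint states / joint actions of N agents are lists of length N.\<close>
definition joint :: "nat \<Rightarrow> 'x list set" where
  "joint N = {xs. length xs = N}"

definition fact_pol :: "('s \<Rightarrow> 'a \<Rightarrow> real) \<Rightarrow> 's list \<Rightarrow> 'a list \<Rightarrow> real" where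
  "fact_pol \<mu> s a = (\<Prod>i<length s. \<mu> (s ! i) (a ! i))"

text \<open>Distribution of the joint state at time t of the Markov chain started in s0,
  actions drawn from nu, transitions by the kernel P (P s a s' = P(s' | s, a)).\<close>
fun state_dist :: "nat \<Rightarrow> ('s list \<Rightarrow> 'a list \<Rightarrow> 's list \<Rightarrow> real) \<Rightarrow>
    ('s \<Rightarrow> 'a \<Rightarrow> real) \<Rightarrow> 's list \<Rightarrow> nat \<Rightarrow> 's list \<Rightarrow> real" where
  "state_dist N P \<mu> s0 0 = (\<lambda>s. if s = s0 then 1 else 0)"
| "state_dist N P \<mu> s0 (Suc t) = (\<lambda>s'. \<Sum>s\<in>joint N. state_dist N P \<mu> s0 t s *
      (\<Sum>a\<in>joint N. fact_pol \<mu> s a * P s a s'))"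

text \<open>V^nu(s0) = (1-gamma) E[sum_t gamma^t r(s_t,a_t)], the expectation written out
  (by linearity) via the time-t state distributions.\<close>
definition value_fn :: "nat \<Rightarrow> ('s list \<Rightarrow> 'a list \<Rightarrow> real) \<Rightarrow>
    ('s list \<Rightarrow> 'a list \<Rightarrow> 's list \<Rightarrow> real) \<Rightarrow> ('s \<Rightarrow> 'a \<Rightarrow> real) \<Rightarrow> real \<Rightarrow> 's list \<Rightarrow> real" where
  "value_fn N r P \<mu> \<gamma> s0 = (1 - \<gamma>) * (\<Sum>t. \<gamma> ^ t *
     (\<Sum>s\<in>joint N. state_dist N P \<mu> s0 t s * (\<Sum>a\<in>joint N. fact_pol \<mu> s a * r s a)))"

definition ins_agent :: "nat \<Rightarrow> 's \<Rightarrow> 's list \<Rightarrow> 's list" where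
  "ins_agent i s sr = take i sr @ s # drop i sr"

definition emp_meas :: "nat \<Rightarrow> 's list \<Rightarrow> 's \<Rightarrow> real" where
  "emp_meas N sr x = real (count_list sr x) / real N"

end

theory Submission
  imports Defs
begin

text \<open>Relabelling the agents by a permutation \<kappa> is a bijection of the joint states which,
  by the symmetry of P and r and the product form of the policy, maps the state distribution
  of the chain started in s0 at every time t to that of the chain started in \<kappa>(s0), and
  preserves the expected reward. Hence the value depends only on the multiset of local states;
  with one agent fixed, the multiset of the others is encoded by their empirical measure.\<close>

lemma permute_list_inv_cancel:
  assumes k: "k permutes {..<length xs}"
  shows "permute_list (inv k) (permute_list k xs) = xs"
    and "permute_list k (permute_list (inv k) xs) = xs"
proof -
  have "permute_list (inv k) (permute_list k xs) = permute_list (k \<circ> inv k) xs"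
    using permute_list_compose[OF permutes_inv[OF k]] by simp
  then show "permute_list (inv k) (permute_list k xs) = xs"
    using permutes_inv_o(1)[OF k] by simp
  have "permute_list k (permute_list (inv k) xs) = permute_list (inv k \<circ> k) xs"
    using permute_list_compose[OF k] by simp
  then show "permute_list k (permute_list (inv k) xs) = xs"
    using permutes_inv_o(2)[OF k] by simp
qed

lemma bij_betw_permute_list_joint:
  assumes "k permutes {..<N}"
  shows "bij_betw (permute_list k) (joint N) (joint N)"
  by (rule bij_betw_byWitness[where f'="permute_list (inv k)"])
    (use assms permute_list_inv_cancel in \<open>auto simp: joint_def\<close>)

lemma sum_joint_permute_list:
  assumes "k permutes {..<N}"
  shows "(\<Sum>x\<in>joint N. f (permute_list k x)) = (\<Sum>x\<in>joint N. f x)"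
  using sum.reindex_bij_betw[OF bij_betw_permute_list_joint[OF assms]] .

lemma fact_pol_permute_list:
  assumes k: "k permutes {..<N}" and "s \<in> joint N" "a \<in> joint N"
  shows "fact_pol \<mu> (permute_list k s) (permute_list k a) = fact_pol \<mu> s a"
proof -
  have "fact_pol \<mu> (permute_list k s) (permute_list k a) = (\<Prod>j<N. \<mu> (s ! k j) (a ! k j))"
    using assms by (simp add: fact_pol_def joint_def permute_list_nth)
  also have "\<dots> = (\<Prod>j<N. \<mu> (s ! j) (a ! j))"
    using prod.reindex_bij_betw[OF permutes_imp_bij[OF k]] by simp
  finally show ?thesis using assms by (simp add: fact_pol_def joint_def)
qed

lemma policy_average_permute_list:
  assumes k: "k permutes {..<N}" and s: "s \<in> joint N"
  shows "(\<Sum>a\<in>joint N. fact_pol \<mu> (permute_list k s) a * f a)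
       = (\<Sum>a\<in>joint N. fact_pol \<mu> s a * f (permute_list k a))"
  by (subst sum_joint_permute_list[OF k, symmetric]) (simp add: fact_pol_permute_list[OF k s])

lemma state_dist_permute_list:
  assumes k: "k permutes {..<N}" and s0: "s0 \<in> joint N"
    and P_inv: "\<And>s a s'. s \<in> joint N \<Longrightarrow> a \<in> joint N \<Longrightarrow> s' \<in> joint N \<Longrightarrow>
                 P (permute_list k s) (permute_list k a) (permute_list k s') = P s a s'"
    and s: "s \<in> joint N"
  shows "state_dist N P \<mu> (permute_list k s0) t (permute_list k s) = state_dist N P \<mu> s0 t s"
  using s
proof (induction t arbitrary: s)
  case 0
  have "permute_list k s = permute_list k s0 \<longleftrightarrow> s = s0"
    using bij_betw_imp_inj_on[OF bij_betw_permute_list_joint[OF k]] 0 s0 by (auto dest: inj_onD)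
  then show ?case by simp
next
  case (Suc t)
  let ?step = "\<lambda>u s'. \<Sum>a\<in>joint N. fact_pol \<mu> u a * P u a s'"
  have "state_dist N P \<mu> (permute_list k s0) (Suc t) (permute_list k s)
      = (\<Sum>u\<in>joint N. state_dist N P \<mu> (permute_list k s0) t (permute_list k u)
           * ?step (permute_list k u) (permute_list k s))"
    using sum_joint_permute_list[OF k,
        of "\<lambda>u. state_dist N P \<mu> (permute_list k s0) t u * ?step u (permute_list k s)"]
    by simp
  also have "\<dots> = (\<Sum>u\<in>joint N. state_dist N P \<mu> s0 t u * ?step u s)"
    using Suc by (intro sum.cong refl) (simp add: policy_average_permute_list[OF k] P_inv)
  finally show ?case by simp
qed

lemma value_fn_permute_list:
  assumes k: "k permutes {..<N}" and s0: "s0 \<in> joint N"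
    and P_inv: "\<And>s a s'. s \<in> joint N \<Longrightarrow> a \<in> joint N \<Longrightarrow> s' \<in> joint N \<Longrightarrow>
                 P (permute_list k s) (permute_list k a) (permute_list k s') = P s a s'"
    and r_inv: "\<And>s a. s \<in> joint N \<Longrightarrow> a \<in> joint N \<Longrightarrow>
                 r (permute_list k s) (permute_list k a) = r s a"
  shows "value_fn N r P \<mu> \<gamma> (permute_list k s0) = value_fn N r P \<mu> \<gamma> s0"
proof -
  let ?reward = "\<lambda>s. \<Sum>a\<in>joint N. fact_pol \<mu> s a * r s a"
  have "(\<Sum>s\<in>joint N. state_dist N P \<mu> (permute_list k s0) t s * ?reward s)
      = (\<Sum>s\<in>joint N. state_dist N P \<mu> s0 t s * ?reward s)" for t
  proof -
    have "(\<Sum>s\<in>joint N. state_dist N P \<mu> (permute_list k s0) t s * ?reward s)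
        = (\<Sum>s\<in>joint N. state_dist N P \<mu> (permute_list k s0) t (permute_list k s)
             * ?reward (permute_list k s))"
      using sum_joint_permute_list[OF k,
          of "\<lambda>s. state_dist N P \<mu> (permute_list k s0) t s * ?reward s"]
      by simp
    also have "\<dots> = (\<Sum>s\<in>joint N. state_dist N P \<mu> s0 t s * ?reward s)"
      by (intro sum.cong refl)
        (simp add: state_dist_permute_list[where P=P and \<mu>=\<mu>, OF k s0 P_inv]
          policy_average_permute_list[OF k] r_inv)
    finally show ?thesis .
  qed
  then show ?thesis by (simp add: value_fn_def)
qed

lemma value_fn_mset_eq:
  assumes "mset x = mset y" and y: "y \<in> joint N"
    and P_inv: "\<And>\<kappa> s a s'. \<kappa> permutes {..<N} \<Longrightarrow> s \<in> joint N \<Longrightarrow> a \<in> joint N \<Longrightarrow> s' \<in> joint N \<Longrightarrow>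
                 P s a s' = P (permute_list \<kappa> s) (permute_list \<kappa> a) (permute_list \<kappa> s')"
    and r_inv: "\<And>\<kappa> s a. \<kappa> permutes {..<N} \<Longrightarrow> s \<in> joint N \<Longrightarrow> a \<in> joint N \<Longrightarrow>
                 r s a = r (permute_list \<kappa> s) (permute_list \<kappa> a)"
  shows "value_fn N r P \<mu> \<gamma> x = value_fn N r P \<mu> \<gamma> y"
proof -
  obtain k where k: "k permutes {..<length y}" and x: "permute_list k y = x"
    using mset_eq_permutation[OF assms(1)] by blast
  have kN: "k permutes {..<N}" using k y by (simp add: joint_def)
  have "value_fn N r P \<mu> \<gamma> (permute_list k y) = value_fn N r P \<mu> \<gamma> y"
    by (rule value_fn_permute_list[OF kN y])
      (rule P_inv[OF kN, symmetric] r_inv[OF kN, symmetric]; assumption)+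
  then show ?thesis using x by simp
qed

lemma mset_ins_agent: "mset (ins_agent i s xs) = add_mset s (mset xs)"
  unfolding ins_agent_def by (metis append_take_drop_id mset_append mset.simps(2) union_mset_add_mset_right)

lemma ins_agent_in_joint: "length sr = N - 1 \<Longrightarrow> i < N \<Longrightarrow> ins_agent i s sr \<in> joint N"
  by (simp add: ins_agent_def joint_def)

lemma emp_meas_eq_iff_mset_eq:
  assumes "0 < N"
  shows "emp_meas N x = emp_meas N y \<longleftrightarrow> mset x = mset y"
  using assms by (auto simp: fun_eq_iff emp_meas_def multiset_eq_iff count_mset)

theorem proposition2:
  fixes N :: nat and i :: nat
    and r :: "('s::finite) list \<Rightarrow> ('a::finite) list \<Rightarrow> real"
    and P :: "'s list \<Rightarrow> 'a list \<Rightarrow> 's list \<Rightarrow> real"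
    and \<mu> :: "'s \<Rightarrow> 'a \<Rightarrow> real" and \<gamma> :: real
  assumes agent: "i < N"
    and gamma: "0 < \<gamma>" "\<gamma> < 1"
    and P_nonneg: "\<And>s a s'. s \<in> joint N \<Longrightarrow> a \<in> joint N \<Longrightarrow> s' \<in> joint N \<Longrightarrow> P s a s' \<ge> 0"
    and P_sum: "\<And>s a. s \<in> joint N \<Longrightarrow> a \<in> joint N \<Longrightarrow> (\<Sum>s'\<in>joint N. P s a s') = 1"
    and mu_nonneg: "\<And>s a. \<mu> s a \<ge> 0"
    and mu_sum: "\<And>s. (\<Sum>a\<in>UNIV. \<mu> s a) = 1"
    and r_inv: "\<And>\<kappa> s a. \<kappa> permutes {..<N} \<Longrightarrow> s \<in> joint N \<Longrightarrow> a \<in> joint N \<Longrightarrow>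
                 r s a = r (permute_list \<kappa> s) (permute_list \<kappa> a)"
    and P_inv: "\<And>\<kappa> s a s'. \<kappa> permutes {..<N} \<Longrightarrow> s \<in> joint N \<Longrightarrow> a \<in> joint N \<Longrightarrow> s' \<in> joint N \<Longrightarrow>
                 P s a s' = P (permute_list \<kappa> s) (permute_list \<kappa> a) (permute_list \<kappa> s')"
  shows "(\<forall>s sr \<kappa>. length sr = N - 1 \<longrightarrow> \<kappa> permutes {..<N - 1} \<longrightarrow>
            value_fn N r P \<mu> \<gamma> (ins_agent i s sr)
              = value_fn N r P \<mu> \<gamma> (ins_agent i s (permute_list \<kappa> sr)))
       \<and> (\<exists>g. \<forall>s sr. length sr = N - 1 \<longrightarrow>
            value_fn N r P \<mu> \<gamma> (ins_agent i s sr) = g s (emp_meas N sr))"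
proof
  let ?V = "value_fn N r P \<mu> \<gamma>"
  have V_mset: "?V (ins_agent i s x) = ?V (ins_agent i s y)"
    if "mset x = mset y" "length y = N - 1" for s x y
    by (rule value_fn_mset_eq[where P=P and r=r, OF _ ins_agent_in_joint[OF that(2) agent] P_inv r_inv])
      (simp add: mset_ins_agent that(1))
  show "\<forall>s sr \<kappa>. length sr = N - 1 \<longrightarrow> \<kappa> permutes {..<N - 1} \<longrightarrow>
          ?V (ins_agent i s sr) = ?V (ins_agent i s (permute_list \<kappa> sr))"
    by (metis V_mset mset_permute_list)
  let ?R = "{sr :: 's list. length sr = N - 1}"
  let ?g = "\<lambda>s m. ?V (ins_agent i s (inv_into ?R (emp_meas N) m))"
  have "?V (ins_agent i s sr) = ?g s (emp_meas N sr)" if "length sr = N - 1" for s sr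
  proof (rule V_mset)
    show "mset sr = mset (inv_into ?R (emp_meas N) (emp_meas N sr))"
      using f_inv_into_f[of "emp_meas N sr" "emp_meas N" ?R] that agent
      by (simp add: emp_meas_eq_iff_mset_eq)
    show "length (inv_into ?R (emp_meas N) (emp_meas N sr)) = N - 1"
      using inv_into_into[of "emp_meas N sr" "emp_meas N" ?R] that by simp
  qed
  then show "\<exists>g. \<forall>s sr. length sr = N - 1 \<longrightarrow> ?V (ins_agent i s sr) = g s (emp_meas N sr)"
    by (intro exI[of _ ?g]) simp
qed

end
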